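(* Let $m\ge1$ and $a_1,\dots,a_{2m},b_1,\dots,b_{2m}\in\mathbb{C}$. Assume there exists $j^*\in\mathbb{N}$ such that $\lambda_{2j}=0$ for all $1\le j\le j^*$. Then $\mathrm{Im}\,a_{2j}=\lambda^+_{2j}=0$ for all $1\le j\le j^*$, and $\lambda^-_j=0$ for all $1\le j\le 2j^*+3$ (with $j\le 2m-1$).
   Context: Empty sums are zero. Constants: $\gamma_j=b_{2j}-\sum_{k=1}^{j-1}\bar a_{2(j-k)}\gamma_k$ ($1\le j\le m-1$); $\lambda_{2j}=2\,\mathrm{Im}\,a_{2j}-2\sum_{k=1}^{j-1}\mathrm{Im}(\bar b_{2(j-k)}\gamma_k)$ ($1\le j\le m-1$); $\alpha_j=b_j-\frac12\sum_{k=1}^{j-1}(1+(-1)^{j-k})\bar a_{j-k}\alpha_k$, $\lambda_j^+=2\,\mathrm{Im}\,a_j+\sum_{k=1}^{j-1}(-1)^{j-k+1}\mathrm{Im}(\bar b_{j-k}\alpha_k)$, $\lambda_j^-=-\sum_{k=1}^{j-1}\mathrm{Im}(\bar b_{j-k}\alpha_k)$ ($1\le j\le 2m-1$). *)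

theory Defs
  imports Complex_Main
begin

text \<open>Sequences a_1..a_2m, b_1..b_2m are modelled as functions nat => complex;
only the indices 1..2m are ever used.\<close>

function gamma :: "(nat \<Rightarrow> complex) \<Rightarrow> (nat \<Rightarrow> complex) \<Rightarrow> nat \<Rightarrow> complex" where
  "gamma a b j = b (2*j) - (\<Sum>k\<in>{1..<j}. cnj (a (2*(j-k))) * gamma a b k)"
  by auto
termination by (relation "measure (\<lambda>(a,b,j). j)") auto

definition lam2 :: "(nat \<Rightarrow> complex) \<Rightarrow> (nat \<Rightarrow> complex) \<Rightarrow> nat \<Rightarrow> real" where
  "lam2 a b j = 2 * Im (a (2*j)) - 2 * (\<Sum>k\<in>{1..<j}. Im (cnj (b (2*(j-k))) * gamma a b k))"

function alpha :: "(nat \<Rightarrow> complex) \<Rightarrow> (nat \<Rightarrow> complex) \<Rightarrow> nat \<Rightarrow> complex" where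
  "alpha a b j = b j - (1/2) * (\<Sum>k\<in>{1..<j}. (1 + (-1)^(j-k)) * cnj (a (j-k)) * alpha a b k)"
  by auto
termination by (relation "measure (\<lambda>(a,b,j). j)") auto

definition lam_plus :: "(nat \<Rightarrow> complex) \<Rightarrow> (nat \<Rightarrow> complex) \<Rightarrow> nat \<Rightarrow> real" where
  "lam_plus a b j = 2 * Im (a j) + (\<Sum>k\<in>{1..<j}. (-1)^(j-k+1) * Im (cnj (b (j-k)) * alpha a b k))"

definition lam_minus :: "(nat \<Rightarrow> complex) \<Rightarrow> (nat \<Rightarrow> complex) \<Rightarrow> nat \<Rightarrow> real" where
  "lam_minus a b j = - (\<Sum>k\<in>{1..<j}. Im (cnj (b (j-k)) * alpha a b k))"

end

theory Submission
  imports Defs "HOL-Computational_Algebra.Formal_Power_Series"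
begin

(* Let B(x) = sum b_n x^n and E(x) = 1 + sum_{n even} cnj(a_n) x^n. The recursion defining alpha
   says that its generating series is A = B/E, so lambda^-_j = -Im [x^j] E^-1 B cnj(B), where cnj
   acts on coefficients. Likewise gamma is generated by B_2/E_2, built from the even-indexed b's
   and a's, and lambda_{2j} = 2 Im a_{2j} - 2 Im [x^j] E_2^-1 B_2 cnj(B_2).
   A series of the form B cnj(B) has real coefficients and starts in degree 2, so its product with
   E^-1 has a real coefficient in degree j as soon as E, hence E^-1, is real up to degree j - 2.
   Induction on j turns lambda_{2j} = 0 into Im a_{2j} = 0; then E is real up to degree 2j*+1,
   which gives lambda^-_j = 0 for j <= 2j*+3. For lambda^+ one uses that E is even, so
   A(-x) = E(x)^-1 B(-x), and that B(-x) cnj(B)(x) has real coefficients in even degrees. *)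

unbundle fps_syntax

definition fps_cnj :: "complex fps \<Rightarrow> complex fps" where
  "fps_cnj f = Abs_fps (\<lambda>n. cnj (f $ n))"

lemma fps_cnj_nth [simp]: "fps_cnj f $ n = cnj (f $ n)"
  by (simp add: fps_cnj_def)

lemma fps_cnj_cnj [simp]: "fps_cnj (fps_cnj f) = f"
  by (simp add: fps_eq_iff)

lemma fps_cnj_mult: "fps_cnj (f * g) = fps_cnj f * fps_cnj g"
  by (simp add: fps_eq_iff fps_mult_nth)

lemma fps_cnj_compose_uminus: "fps_cnj (f oo -fps_X) = fps_cnj f oo -fps_X"
  by (simp add: fps_eq_iff fps_compose_uminus')

lemma fps_compose_uminus_uminus [simp]:
  "(f oo -fps_X) oo -fps_X = (f :: 'a::comm_ring_1 fps)"
  by (simp add: fps_eq_iff fps_compose_uminus' mult.assoc[symmetric])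

lemma fps_compose_uminus_fixed_odd_nth:
  fixes f :: "complex fps"
  assumes "f oo -fps_X = f" "odd n"
  shows "f $ n = 0"
proof -
  have "(f oo -fps_X) $ n = f $ n"
    using assms(1) by simp
  then show ?thesis
    using assms(2) by (simp add: fps_compose_uminus')
qed

lemma fps_inverse_compose_uminus_fixed:
  fixes f :: "'a::field fps"
  assumes "f oo -fps_X = f" "f $ 0 \<noteq> 0"
  shows "inverse f oo -fps_X = inverse f"
  using fps_inverse_compose[of "-fps_X" f] assms by simp

lemma fps_mult_cnj_self_nth_Reals: "(f * fps_cnj f) $ n \<in> \<real>"
proof -
  have "fps_cnj (f * fps_cnj f) = f * fps_cnj f"
    by (simp add: fps_cnj_mult fps_eq_iff mult.commute)
  then show ?thesis
    by (metis Reals_cnj_iff fps_cnj_nth)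
qed

lemma fps_inverse_nth_Reals:
  fixes f :: "complex fps"
  assumes "\<forall>i\<le>N. f $ i \<in> \<real>" "n \<le> N"
  shows "inverse f $ n \<in> \<real>"
  using assms(2)
proof (induction n rule: less_induct)
  case (less n)
  show ?case
  proof (cases "n = 0")
    case True
    then show ?thesis using assms(1) by simp
  next
    case False
    have "f $ i \<in> \<real>" "inverse f $ (n - i) \<in> \<real>" if "i \<in> {1..n}" for i
      using that less assms(1) by auto
    then have "- inverse (f $ 0) * (\<Sum>i=1..n. f $ i * inverse f $ (n - i)) \<in> \<real>"
      using assms(1) by (auto intro!: Reals_mult Reals_minus Reals_inverse sum_in_Reals)
    then show ?thesis
      using False by (simp add: fps_inverse_def fps_right_inverse_constructor_rec)
  qed
qed

lemma fps_mult_nth_Reals: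
  fixes f g :: "complex fps"
  assumes "\<forall>i\<le>N. f $ i \<in> \<real>" "\<forall>i. g $ i \<in> \<real>" "\<forall>i<k. g $ i = 0" "n \<le> N + k"
  shows "(f * g) $ n \<in> \<real>"
proof -
  have "f $ i * g $ (n - i) \<in> \<real>" if "i \<le> n" for i
  proof (cases "n - i < k")
    case True
    then show ?thesis using assms(3) by simp
  next
    case False
    then show ?thesis using assms that by simp
  qed
  then show ?thesis
    by (auto simp: fps_mult_nth intro: sum_in_Reals)
qed

lemma fps_mult_even_nth_Reals:
  fixes f g :: "complex fps"
  assumes "\<forall>i. odd i \<longrightarrow> f $ i = 0" "\<forall>i\<le>N. f $ i \<in> \<real>"
    and "\<forall>i. even i \<longrightarrow> g $ i \<in> \<real>" "g $ 0 = 0"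
    and "even n" "n \<le> N + 2"
  shows "(f * g) $ n \<in> \<real>"
proof -
  have "f $ i * g $ (n - i) \<in> \<real>" if "i \<le> n" for i
  proof (cases "odd i \<or> i = n")
    case True
    then show ?thesis using assms(1,4) by auto
  next
    case False
    then have "i \<le> N" "even (n - i)"
      using assms(5,6) that by (auto elim!: evenE oddE)
    then show ?thesis using assms(2,3) by simp
  qed
  then show ?thesis
    by (auto simp: fps_mult_nth intro: sum_in_Reals)
qed

lemma fps_cnj_compose_uminus_fixed_even_nth_Reals:
  assumes "fps_cnj g oo -fps_X = g" "even n"
  shows "g $ n \<in> \<real>"
proof -
  have "(fps_cnj g oo -fps_X) $ n = g $ n"
    using assms(1) by simp
  then have "cnj (g $ n) = g $ n"
    using assms(2) by (simp add: fps_compose_uminus')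
  then show ?thesis by (simp add: Reals_cnj_iff)
qed

lemma fps_compose_uminus_mult_cnj_fixed:
  "fps_cnj ((f oo -fps_X) * fps_cnj f) oo -fps_X = (f oo -fps_X) * fps_cnj f"
proof -
  have "fps_cnj ((f oo -fps_X) * fps_cnj f) oo -fps_X = ((fps_cnj f oo -fps_X) * f) oo -fps_X"
    by (simp only: fps_cnj_mult fps_cnj_compose_uminus fps_cnj_cnj)
  also have "\<dots> = fps_cnj f * (f oo -fps_X)"
    by (simp add: fps_compose_mult_distrib)
  finally show ?thesis
    by (simp only: mult.commute)
qed

definition fps_from :: "'a \<Rightarrow> (nat \<Rightarrow> 'a) \<Rightarrow> 'a::zero fps" where
  "fps_from c x = Abs_fps (\<lambda>n. if n = 0 then c else x n)"

lemma fps_from_nth [simp]: "fps_from c x $ n = (if n = 0 then c else x n)"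
  by (simp add: fps_from_def)

lemma fps_cnj_fps_from: "fps_cnj (fps_from c x) = fps_from (cnj c) (\<lambda>n. cnj (x n))"
  by (simp add: fps_eq_iff)

lemma fps_from_compose_uminus:
  "fps_from 0 x oo -fps_X = fps_from 0 (\<lambda>n. (-1) ^ n * x n :: 'a::comm_ring_1)"
  by (simp add: fps_eq_iff fps_compose_uminus')

lemma fps_from_mult_nth:
  fixes x y :: "nat \<Rightarrow> 'a::comm_semiring_1"
  assumes "n \<ge> 1"
  shows "(fps_from c x * fps_from 0 y) $ n = c * y n + (\<Sum>k\<in>{1..<n}. x (n - k) * y k)"
proof -
  have "(fps_from c x * fps_from 0 y) $ n = (\<Sum>k=0..n. fps_from c x $ (n - k) * fps_from 0 y $ k)"
    by (subst mult.commute) (simp add: fps_mult_nth mult.commute)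
  also have "\<dots> = c * y n + (\<Sum>k\<in>{1..<n}. fps_from c x $ (n - k) * fps_from 0 y $ k)"
  proof -
    have "{0..n} = insert 0 (insert n {1..<n})"
      using assms by auto
    then show ?thesis
      using assms by simp
  qed
  also have "(\<Sum>k\<in>{1..<n}. fps_from c x $ (n - k) * fps_from 0 y $ k) = (\<Sum>k\<in>{1..<n}. x (n - k) * y k)"
    by (rule sum.cong) auto
  finally show ?thesis .
qed

lemma fps_from_eq_inverse_mult_if_recurrence:
  fixes c x y :: "nat \<Rightarrow> 'a::field"
  assumes "\<And>n. n \<ge> 1 \<Longrightarrow> x n = y n - (\<Sum>k\<in>{1..<n}. c (n - k) * x k)"
  shows "fps_from 0 x = inverse (fps_from 1 c) * fps_from 0 y"
proof -
  have "fps_from 1 c * fps_from 0 x = fps_from 0 y"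
  proof (rule fps_ext)
    fix n
    show "(fps_from 1 c * fps_from 0 x) $ n = fps_from 0 y $ n"
      using assms[of n] by (cases "n = 0") (simp_all add: fps_from_mult_nth)
  qed
  moreover have "inverse (fps_from 1 c) * fps_from 1 c = 1"
    by (simp add: inverse_mult_eq_1)
  ultimately show ?thesis
    by (metis mult.assoc mult_1)
qed

lemma fps_inverse_mult_cnj_self_nth_Reals:
  fixes e :: "complex fps"
  assumes "\<forall>i\<le>N. e $ i \<in> \<real>" "n \<le> N + 2"
  shows "(inverse e * (fps_from 0 x * fps_cnj (fps_from 0 x))) $ n \<in> \<real>"
proof (rule fps_mult_nth_Reals)
  show "\<forall>i\<le>N. inverse e $ i \<in> \<real>"
    using assms(1) fps_inverse_nth_Reals by blast
  show "\<forall>i<2. (fps_from 0 x * fps_cnj (fps_from 0 x)) $ i = 0"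
    by (simp add: less_2_cases_iff)
qed (use assms(2) fps_mult_cnj_self_nth_Reals in auto)

declare alpha.simps [simp del] gamma.simps [simp del]

definition alpha_denom :: "(nat \<Rightarrow> complex) \<Rightarrow> complex fps" where
  "alpha_denom a = fps_from 1 (\<lambda>n. if even n then cnj (a n) else 0)"

definition gamma_denom :: "(nat \<Rightarrow> complex) \<Rightarrow> complex fps" where
  "gamma_denom a = fps_from 1 (\<lambda>n. cnj (a (2 * n)))"

lemma alpha_fps_eq: "fps_from 0 (alpha a b) = inverse (alpha_denom a) * fps_from 0 b"
  unfolding alpha_denom_def
proof (rule fps_from_eq_inverse_mult_if_recurrence)
  fix n :: nat
  have parity_factor: "1 / 2 * ((1 + (-1) ^ (n - k)) * cnj (a (n - k)) * alpha a b k) =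
      (if even (n - k) then cnj (a (n - k)) else 0) * alpha a b k" for k
    by simp
  show "alpha a b n = b n -
      (\<Sum>k\<in>{1..<n}. (if even (n - k) then cnj (a (n - k)) else 0) * alpha a b k)"
    by (subst alpha.simps) (simp only: sum_distrib_left parity_factor)
qed

lemma gamma_fps_eq:
  "fps_from 0 (gamma a b) = inverse (gamma_denom a) * fps_from 0 (\<lambda>n. b (2 * n))"
  unfolding gamma_denom_def
  by (rule fps_from_eq_inverse_mult_if_recurrence) (subst gamma.simps, simp)

lemma lam_minus_eq: "lam_minus a b j = - Im ((fps_cnj (fps_from 0 b) * fps_from 0 (alpha a b)) $ j)"
proof (cases "j = 0")
  case False
  then show ?thesis
    by (simp add: lam_minus_def fps_cnj_fps_from fps_from_mult_nth Im_sum)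
qed (simp add: lam_minus_def)

lemma lam2_eq:
  "lam2 a b j = 2 * Im (a (2 * j)) -
      2 * Im ((fps_cnj (fps_from 0 (\<lambda>n. b (2 * n))) * fps_from 0 (gamma a b)) $ j)"
proof (cases "j = 0")
  case False
  then show ?thesis
    by (simp add: lam2_def fps_cnj_fps_from fps_from_mult_nth Im_sum)
qed (simp add: lam2_def)

lemma lam_plus_double_eq:
  "lam_plus a b (2 * j) = 2 * Im (a (2 * j)) -
      Im ((fps_cnj (fps_from 0 b) * (fps_from 0 (alpha a b) oo -fps_X)) $ (2 * j))"
proof (cases "j = 0")
  case False
  have "(-1) ^ (2 * j - k + 1) * Im (cnj (b (2 * j - k)) * alpha a b k) =
      - Im (cnj (b (2 * j - k)) * ((-1) ^ k * alpha a b k))" if "k < 2 * j" for k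
    using that by (cases "even k") auto
  then show ?thesis
    using False
    by (simp add: lam_plus_def fps_cnj_fps_from fps_from_compose_uminus fps_from_mult_nth Im_sum
        sum_negf[symmetric])
qed (simp add: lam_plus_def)

lemma Im_a_double_eq_0:
  assumes "\<forall>j. 1 \<le> j \<and> j \<le> J \<longrightarrow> lam2 a b j = 0" "1 \<le> j" "j \<le> J"
  shows "Im (a (2 * j)) = 0"
  using assms(2,3)
proof (induction j rule: less_induct)
  case (less j)
  let ?B = "fps_from 0 (\<lambda>n. b (2 * n))"
  have "\<forall>i\<le>j - 1. gamma_denom a $ i \<in> \<real>"
    using less by (auto simp: gamma_denom_def complex_is_Real_iff)
  then have "(inverse (gamma_denom a) * (?B * fps_cnj ?B)) $ j \<in> \<real>"
    by (rule fps_inverse_mult_cnj_self_nth_Reals) simp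
  then have "Im ((fps_cnj ?B * fps_from 0 (gamma a b)) $ j) = 0"
    by (simp add: gamma_fps_eq complex_is_Real_iff ac_simps)
  then show ?case
    using lam2_eq[of a b j] assms(1) less.prems by simp
qed

lemma alpha_denom_nth_Reals:
  assumes "\<And>j. 1 \<le> j \<Longrightarrow> j \<le> J \<Longrightarrow> Im (a (2 * j)) = 0" "i \<le> 2 * J + 1"
  shows "alpha_denom a $ i \<in> \<real>"
proof (cases "i = 0 \<or> odd i")
  case False
  then obtain j where "i = 2 * j" "1 \<le> j" "j \<le> J"
    using assms(2) by (auto elim!: evenE)
  then show ?thesis
    using assms(1) by (simp add: alpha_denom_def complex_is_Real_iff)
qed (auto simp: alpha_denom_def)

lemma alpha_denom_compose_uminus: "alpha_denom a oo -fps_X = alpha_denom a"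
  by (simp add: alpha_denom_def fps_eq_iff fps_compose_uminus')

lemma lam_minus_eq_0:
  assumes "\<forall>i\<le>N. alpha_denom a $ i \<in> \<real>" "j \<le> N + 2"
  shows "lam_minus a b j = 0"
proof -
  have "(inverse (alpha_denom a) * (fps_from 0 b * fps_cnj (fps_from 0 b))) $ j \<in> \<real>"
    using assms by (rule fps_inverse_mult_cnj_self_nth_Reals)
  then show ?thesis
    by (simp add: lam_minus_eq alpha_fps_eq complex_is_Real_iff ac_simps)
qed

lemma lam_plus_double_eq_0:
  assumes "\<forall>i\<le>N. alpha_denom a $ i \<in> \<real>" "2 * j \<le> N + 2" "Im (a (2 * j)) = 0"
  shows "lam_plus a b (2 * j) = 0"
proof -
  let ?E = "alpha_denom a" and ?B = "fps_from 0 b"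
  have inverse_even: "inverse ?E oo -fps_X = inverse ?E"
    using alpha_denom_compose_uminus
    by (rule fps_inverse_compose_uminus_fixed) (simp add: alpha_denom_def)
  have "fps_from 0 (alpha a b) oo -fps_X = inverse ?E * (?B oo -fps_X)"
    \<comment> \<open>substituting -x into A = B/E only affects B, as E is even\<close>
    by (simp add: alpha_fps_eq fps_compose_mult_distrib inverse_even)
  moreover have "(inverse ?E * ((?B oo -fps_X) * fps_cnj ?B)) $ (2 * j) \<in> \<real>"
  proof (rule fps_mult_even_nth_Reals)
    show "\<forall>i. odd i \<longrightarrow> inverse ?E $ i = 0"
      using inverse_even fps_compose_uminus_fixed_odd_nth by blast
    show "\<forall>i\<le>N. inverse ?E $ i \<in> \<real>"
      using assms(1) fps_inverse_nth_Reals by blast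
    show "\<forall>i. even i \<longrightarrow> ((?B oo -fps_X) * fps_cnj ?B) $ i \<in> \<real>"
      using fps_compose_uminus_mult_cnj_fixed fps_cnj_compose_uminus_fixed_even_nth_Reals by blast
  qed (use assms(2) in \<open>simp_all add: fps_compose_nth_0\<close>)
  ultimately have "Im ((fps_cnj ?B * (fps_from 0 (alpha a b) oo -fps_X)) $ (2 * j)) = 0"
    by (simp add: complex_is_Real_iff ac_simps)
  then show ?thesis
    using assms(3) lam_plus_double_eq[of a b j] by simp
qed

theorem lemma2p3:
  fixes m jstar :: nat and a b :: "nat \<Rightarrow> complex"
  assumes "m \<ge> 1"
    and "jstar \<le> m - 1"
    and "\<forall>j. 1 \<le> j \<and> j \<le> jstar \<longrightarrow> lam2 a b j = 0"
  shows "(\<forall>j. 1 \<le> j \<and> j \<le> jstar \<longrightarrow> Im (a (2*j)) = 0 \<and> lam_plus a b (2*j) = 0)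
       \<and> (\<forall>j. 1 \<le> j \<and> j \<le> 2*jstar + 3 \<and> j \<le> 2*m - 1 \<longrightarrow> lam_minus a b j = 0)"
proof -
  \<comment> \<open>the bounds involving m only delimit the paper's finite index range and are not needed\<close>
  have a_real: "Im (a (2 * j)) = 0" if "1 \<le> j" "j \<le> jstar" for j
    using Im_a_double_eq_0 assms(3) that by blast
  have denom_real: "\<forall>i\<le>2 * jstar + 1. alpha_denom a $ i \<in> \<real>"
    using alpha_denom_nth_Reals a_real by blast
  show ?thesis
    using a_real lam_plus_double_eq_0[OF denom_real] lam_minus_eq_0[OF denom_real] by auto
qed

end
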